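(* Let $(L,T,U,\bar e)$ be a feasible basis structure of an instance of the budget-constrained minimum cost flow problem, with node potentials $\pi,\mu$, and let $e$ be an entering edge (i.e. $e\in L$ with $d_e<0$, or $e\in U$ with $d_e>0$). Then the tuple $(L',T',U',\bar e')$ resulting from a simplex pivot with entering edge $e$ (and any choice of leaving edge) is again a feasible basis structure; in particular $b(C'(\bar e'))\ne 0$, where $C'(\bar e')$ is the cycle closed by $\bar e'$ with $T'$.
   Context: Problem: directed multigraph $G=(V,E)$, capacities $u_e\in\mathbb{N}_{\ge0}$, costs $c_e\in\mathbb{Z}$, usage fees $b_e\in\mathbb{N}_{\ge0}$, budget $B\in\mathbb{N}_{\ge0}$. A feasible flow is $x\in\mathbb{R}^E$ with flow conservation $\sum_{e\in\delta^-(v)}x_e=\sum_{e\in\delta^+(v)}x_e$ at every node and $0\le x\le u$; $c(x)=\sum_e c_ex_e$, $b(x)=\sum_e b_ex_e$; one minimizes $c(x)$ subject to $b(x)\le B$. Basis structure: tuple $(L,T,U,\bar e)$, $\bar e\in E$, $L,T,U$ a partition of $E\setminus\{\bar e\}$, $T$ a spanning tree of the underlying undirected graph. For $f\notin T$, $C(f)$ is the unique cycle in $T\cup\{f\}$ oriented along $f$, with forward edges $C^+(f)$ and backward edges $C^-(f)$; $b(C(f))=\sum_{C^+(f)}b-\sum_{C^-(f)}b$; $\chi(C)\in\{0,\pm1\}^E$ is $+1$ on $C^+$, $-1$ on $C^-$, $0$ elsewhere. It is required that $b(C(\bar e))\ne0$. The basic solution is the unique $x$ with flow conservation, $x=0$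 on $L$, $x=u$ on $U$, $b(x)=B$; the basis structure is feasible if $0\le x\le u$ (then $x$ is the basic feasible flow). Node potentials: for a fixed root $v_r$, $\pi,\mu:V\to\mathbb{R}$ are the unique functions with $\pi_{v_r}=\mu_{v_r}=0$ and $c^\pi_g:=c_g-\pi_v+\pi_w=0$, $b^\mu_g:=b_g-\mu_v+\mu_w=0$ for all $g=(v,w)\in T$ (reduced costs $c^\pi$, $b^\mu$ are defined this way for all edges). Define $d_g:=c^\pi_g-c^\pi_{\bar e}\, b^\mu_g/b^\mu_{\bar e}$. Simplex pivot: given feasible $(L,T,U,\bar e)$ with basic feasible flow $x$ and entering edge $e$, put $\sigma=1$ if $e\in L$, $\sigma=-1$ if $e\in U$, $\theta=\sigma(\chi(C(e))-\frac{b^\mu_e}{b^\mu_{\bar e}}\chi(C(\bar e)))$; for $f\in E$ let $\delta_f=-x_f/\theta_f$ if $\theta_f<0$, $(u_f-x_f)/\theta_f$ if $\theta_f>0$, $+\infty$ otherwise; $\delta=\min_f\delta_f$, $x'=x+\delta\theta$. A leaving edge is any $e'$ with $\delta_{e'}=\delta$ (so $x'_{e'}\in\{0,u_{e'}\}$). New tuple: if $e'=e$, move $e$ from its set ($L$ or $U$) to the other one; if $e'=\bar e$, set $T'=T$, $\bar e'=e$, remove $e$ from $L$ or $U$, and put $\bar e$ into $L'$ if $x'_{\bar e}=0$, into $U'$ otherwise; else remove $e$ from $L$ or $U$, put $e'$ into $L'$ if $x'_{e'}=0$ and into $U'$ otherwise, and set $T'=T\cup\{e\}\setminus\{e'\}$,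 $\bar e'=\bar e$ if this is a spanning tree, and otherwise $T'=T\cup\{\bar e\}\setminus\{e'\}$, $\bar e'=e$. *)

theory Defs
  imports Main "HOL-Library.Extended_Real"
begin

text \<open>A directed multigraph is given by abstract node and edge sets together with
  tail and head maps (parallel edges and loops are allowed).\<close>

record ('v, 'e) bmcf =
  nodes  :: "'v set"
  edges  :: "'e set"
  tail   :: "'e \<Rightarrow> 'v"
  head   :: "'e \<Rightarrow> 'v"
  cap    :: "'e \<Rightarrow> nat"
  cost   :: "'e \<Rightarrow> int"
  fee    :: "'e \<Rightarrow> nat"
  budget :: nat

definition wf_inst :: "('v, 'e, 'z) bmcf_scheme \<Rightarrow> bool" where
  "wf_inst I \<longleftrightarrow> finite (nodes I) \<and> finite (edges I) \<and>
     (\<forall>g\<in>edges I. tail I g \<in> nodes I \<and> head I g \<in> nodes I)"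

text \<open>A walk is a list of pairs (edge, direction); direction True means the edge is
  traversed from its tail to its head (forward), False means backward.\<close>

fun uwalk :: "('v, 'e, 'z) bmcf_scheme \<Rightarrow> 'e set \<Rightarrow> 'v \<Rightarrow> ('e \<times> bool) list \<Rightarrow> 'v \<Rightarrow> bool" where
  "uwalk I F v [] w \<longleftrightarrow> v = w"
| "uwalk I F v ((g, d) # p) w \<longleftrightarrow> g \<in> F \<and>
     (if d then tail I g = v \<and> uwalk I F (head I g) p w
           else head I g = v \<and> uwalk I F (tail I g) p w)"

fun uverts :: "('v, 'e, 'z) bmcf_scheme \<Rightarrow> 'v \<Rightarrow> ('e \<times> bool) list \<Rightarrow> 'v list" where
  "uverts I v [] = [v]"
| "uverts I v ((g, d) # p) = v # uverts I (if d then head I g else tail I g) p"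

text \<open>A cycle (starting and ending at v): nonempty closed walk with pairwise distinct
  edges and pairwise distinct vertices (apart from start = end). Loops are cycles.\<close>

definition ucycle_at :: "('v, 'e, 'z) bmcf_scheme \<Rightarrow> 'e set \<Rightarrow> 'v \<Rightarrow> ('e \<times> bool) list \<Rightarrow> bool" where
  "ucycle_at I F v p \<longleftrightarrow> p \<noteq> [] \<and> uwalk I F v p v \<and> distinct (map fst p) \<and>
     distinct (tl (uverts I v p))"

definition spanning_tree :: "('v, 'e, 'z) bmcf_scheme \<Rightarrow> 'e set \<Rightarrow> bool" where
  "spanning_tree I T \<longleftrightarrow> T \<subseteq> edges I \<and>
     (\<forall>v\<in>nodes I. \<forall>w\<in>nodes I. \<exists>p. uwalk I T v p w) \<and>
     \<not> (\<exists>v p. ucycle_at I T v p)"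

definition fcycle :: "('v, 'e, 'z) bmcf_scheme \<Rightarrow> 'e set \<Rightarrow> 'e \<Rightarrow> ('e \<times> bool) list" where
  "fcycle I T f = (THE p. ucycle_at I (insert f T) (tail I f) p \<and> hd p = (f, True))"

definition chi :: "('e \<times> bool) list \<Rightarrow> 'e \<Rightarrow> real" where
  "chi p g = (if (g, True) \<in> set p then 1 else if (g, False) \<in> set p then -1 else 0)"

definition bC :: "('v, 'e, 'z) bmcf_scheme \<Rightarrow> 'e set \<Rightarrow> 'e \<Rightarrow> real" where
  "bC I T f = (\<Sum>g\<in>edges I. real (fee I g) * chi (fcycle I T f) g)"

definition is_basic_sol :: "('v, 'e, 'z) bmcf_scheme \<Rightarrow> 'e set \<Rightarrow> 'e set \<Rightarrow> ('e \<Rightarrow> real) \<Rightarrow> bool" where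
  "is_basic_sol I L U x \<longleftrightarrow>
     (\<forall>v\<in>nodes I. (\<Sum>g\<in>{g\<in>edges I. head I g = v}. x g) = (\<Sum>g\<in>{g\<in>edges I. tail I g = v}. x g)) \<and>
     (\<forall>g\<in>L. x g = 0) \<and> (\<forall>g\<in>U. x g = real (cap I g)) \<and>
     (\<Sum>g\<in>edges I. real (fee I g) * x g) = real (budget I) \<and>
     (\<forall>g. g \<notin> edges I \<longrightarrow> x g = 0)"

text \<open>The basic solution (values outside the edge set are normalised to 0).\<close>

definition basic_sol :: "('v, 'e, 'z) bmcf_scheme \<Rightarrow> 'e set \<Rightarrow> 'e set \<Rightarrow> 'e \<Rightarrow> real" where
  "basic_sol I L U = (THE x. is_basic_sol I L U x)"

definition basis_structure :: "('v, 'e, 'z) bmcf_scheme \<Rightarrow> 'e set \<Rightarrow> 'e set \<Rightarrow> 'e set \<Rightarrow> 'e \<Rightarrow> bool" where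
  "basis_structure I L T U eb \<longleftrightarrow> eb \<in> edges I \<and>
     L \<union> T \<union> U = edges I - {eb} \<and> L \<inter> T = {} \<and> L \<inter> U = {} \<and> T \<inter> U = {} \<and>
     spanning_tree I T \<and> bC I T eb \<noteq> 0"

definition feasible_basis :: "('v, 'e, 'z) bmcf_scheme \<Rightarrow> 'e set \<Rightarrow> 'e set \<Rightarrow> 'e set \<Rightarrow> 'e \<Rightarrow> bool" where
  "feasible_basis I L T U eb \<longleftrightarrow> basis_structure I L T U eb \<and>
     (\<forall>g\<in>edges I. 0 \<le> basic_sol I L U g \<and> basic_sol I L U g \<le> real (cap I g))"

definition reduced :: "('v, 'e, 'z) bmcf_scheme \<Rightarrow> ('e \<Rightarrow> real) \<Rightarrow> ('v \<Rightarrow> real) \<Rightarrow> 'e \<Rightarrow> real" where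
  "reduced I w p g = w g - p (tail I g) + p (head I g)"

definition is_potential :: "('v, 'e, 'z) bmcf_scheme \<Rightarrow> 'e set \<Rightarrow> 'v \<Rightarrow> ('e \<Rightarrow> real) \<Rightarrow> ('v \<Rightarrow> real) \<Rightarrow> bool" where
  "is_potential I T r w p \<longleftrightarrow> p r = 0 \<and> (\<forall>g\<in>T. reduced I w p g = 0)"

abbreviation costr :: "('v, 'e, 'z) bmcf_scheme \<Rightarrow> 'e \<Rightarrow> real" where
  "costr I g \<equiv> real_of_int (cost I g)"

abbreviation feer :: "('v, 'e, 'z) bmcf_scheme \<Rightarrow> 'e \<Rightarrow> real" where
  "feer I g \<equiv> real (fee I g)"

definition dval :: "('v, 'e, 'z) bmcf_scheme \<Rightarrow> ('v \<Rightarrow> real) \<Rightarrow> ('v \<Rightarrow> real) \<Rightarrow> 'e \<Rightarrow> 'e \<Rightarrow> real" where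
  "dval I pp mu eb g = reduced I (costr I) pp g
      - reduced I (costr I) pp eb * reduced I (feer I) mu g / reduced I (feer I) mu eb"

definition pv_sigma :: "'e set \<Rightarrow> 'e \<Rightarrow> real" where
  "pv_sigma L e = (if e \<in> L then 1 else -1)"

definition pv_theta :: "('v, 'e, 'z) bmcf_scheme \<Rightarrow> 'e set \<Rightarrow> 'e set \<Rightarrow> 'e \<Rightarrow> ('v \<Rightarrow> real) \<Rightarrow> 'e \<Rightarrow> 'e \<Rightarrow> real" where
  "pv_theta I L T eb mu e f = pv_sigma L e *
     (chi (fcycle I T e) f - reduced I (feer I) mu e / reduced I (feer I) mu eb * chi (fcycle I T eb) f)"

definition pv_deltaf :: "('v, 'e, 'z) bmcf_scheme \<Rightarrow> ('e \<Rightarrow> real) \<Rightarrow> ('e \<Rightarrow> real) \<Rightarrow> 'e \<Rightarrow> ereal" where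
  "pv_deltaf I x th f = (if th f < 0 then ereal (- x f / th f)
      else if th f > 0 then ereal ((real (cap I f) - x f) / th f) else \<infinity>)"

definition pv_delta :: "('v, 'e, 'z) bmcf_scheme \<Rightarrow> ('e \<Rightarrow> real) \<Rightarrow> ('e \<Rightarrow> real) \<Rightarrow> ereal" where
  "pv_delta I x th = Min (pv_deltaf I x th ` edges I)"

definition is_leaving :: "('v, 'e, 'z) bmcf_scheme \<Rightarrow> 'e set \<Rightarrow> 'e set \<Rightarrow> 'e set \<Rightarrow> 'e \<Rightarrow> ('v \<Rightarrow> real) \<Rightarrow> 'e \<Rightarrow> 'e \<Rightarrow> bool" where
  "is_leaving I L T U eb mu e e' \<longleftrightarrow>
     (let x = basic_sol I L U; th = pv_theta I L T eb mu e
      in e' \<in> edges I \<and> pv_deltaf I x th e' = pv_delta I x th)"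

definition pv_newflow :: "('v, 'e, 'z) bmcf_scheme \<Rightarrow> 'e set \<Rightarrow> 'e set \<Rightarrow> 'e set \<Rightarrow> 'e \<Rightarrow> ('v \<Rightarrow> real) \<Rightarrow> 'e \<Rightarrow> 'e \<Rightarrow> real" where
  "pv_newflow I L T U eb mu e =
     (let x = basic_sol I L U; th = pv_theta I L T eb mu e
      in (\<lambda>g. x g + real_of_ereal (pv_delta I x th) * th g))"

definition pivot_tuple :: "('v, 'e, 'z) bmcf_scheme \<Rightarrow> 'e set \<Rightarrow> 'e set \<Rightarrow> 'e set \<Rightarrow> 'e \<Rightarrow> ('v \<Rightarrow> real) \<Rightarrow> 'e \<Rightarrow> 'e
     \<Rightarrow> 'e set \<times> 'e set \<times> 'e set \<times> 'e" where
  "pivot_tuple I L T U eb mu e e' =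
    (let x' = pv_newflow I L T U eb mu e; L0 = L - {e}; U0 = U - {e} in
     if e' = e then
       (if e \<in> L then (L - {e}, T, insert e U, eb) else (insert e L, T, U - {e}, eb))
     else if e' = eb then
       (if x' eb = 0 then (insert eb L0, T, U0, e) else (L0, T, insert eb U0, e))
     else
       (let L1 = (if x' e' = 0 then insert e' L0 else L0);
            U1 = (if x' e' = 0 then U0 else insert e' U0)
        in if spanning_tree I ((T \<union> {e}) - {e'})
           then (L1, (T \<union> {e}) - {e'}, U1, eb)
           else (L1, (T \<union> {eb}) - {e'}, U1, e)))"

end

(*
  The pivot moves the basic flow x along theta, which up to sign is the only circulation
  supported on T \<union> {e, eb} whose fee vanishes (a circulation is determined by its values off
  the tree, and the fee fixes the ratio of its values on e and eb).  Hence x' = x + delta theta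
  still satisfies conservation and the budget, respects the bounds by the choice of delta, and
  is tight at the leaving edge e': it is the basic solution of the new tuple.  The new tree is
  spanning by the exchange property of fundamental cycles.  Finally, the cycle of the new special
  edge lies in T \<union> {e, eb} and avoids e'; if its fee were zero it would be a multiple of theta
  vanishing at e', where theta does not vanish.
*)

theory Submission
  imports Defs
begin

section \<open>Walks, paths and cycles\<close>

lemma uwalk_mono: "uwalk I F v p w \<Longrightarrow> F \<subseteq> F' \<Longrightarrow> uwalk I F' v p w"
  by (induction I F v p w rule: uwalk.induct) (auto split: if_splits)

lemma uwalk_edges_subset: "uwalk I F v p w \<Longrightarrow> fst ` set p \<subseteq> F"
  by (induction I F v p w rule: uwalk.induct) (auto split: if_splits)

lemma uwalk_restrict: "uwalk I F v p w \<Longrightarrow> fst ` set p \<subseteq> F' \<Longrightarrow> uwalk I F' v p w"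
  by (induction I F v p w rule: uwalk.induct) (auto split: if_splits)

lemma uwalk_append: "uwalk I F v (p @ q) w \<longleftrightarrow> (\<exists>u. uwalk I F v p u \<and> uwalk I F u q w)"
proof (induction p arbitrary: v)
  case Nil then show ?case by simp
next
  case (Cons a p) then show ?case by (cases a) auto
qed

lemma uverts_length[simp]: "length (uverts I v p) = Suc (length p)"
  by (induction I v p rule: uverts.induct) auto

lemma uverts_nth_0[simp]: "uverts I v p ! 0 = v"
  by (cases p) auto

lemma uverts_take: "i \<le> length p \<Longrightarrow> uverts I v (take i p) = take (Suc i) (uverts I v p)"
proof (induction p arbitrary: v i)
  case Nil then show ?case by simp
next
  case (Cons a p) then show ?case by (cases a; cases i) auto
qed

lemma uwalk_take_drop:
  "uwalk I F v p w \<Longrightarrow> i \<le> length p \<Longrightarrow>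
    uwalk I F v (take i p) (uverts I v p ! i) \<and> uwalk I F (uverts I v p ! i) (drop i p) w"
proof (induction p arbitrary: v i)
  case Nil then show ?case by simp
next
  case (Cons a p)
  obtain g d where a: "a = (g,d)" by force
  show ?case
  proof (cases i)
    case 0 then show ?thesis using Cons by simp
  next
    case (Suc j)
    then show ?thesis using Cons.prems Cons.IH[of _ j] a by (auto split: if_splits)
  qed
qed

lemma uwalk_nth:
  "uwalk I F v p w \<Longrightarrow> k < length p \<Longrightarrow> p ! k = (g, d) \<Longrightarrow>
    g \<in> F \<and> (if d then tail I g = uverts I v p ! k \<and> head I g = uverts I v p ! Suc k
             else head I g = uverts I v p ! k \<and> tail I g = uverts I v p ! Suc k)"
proof (induction p arbitrary: v k)
  case Nil then show ?case by simp
next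
  case (Cons a p)
  obtain h e where a: "a = (h,e)" by force
  show ?case
  proof (cases k)
    case 0 then show ?thesis using Cons.prems a by (cases p) (auto split: if_splits)
  next
    case (Suc j)
    then show ?thesis using Cons.prems Cons.IH[of _ j] a by (auto split: if_splits)
  qed
qed

lemma uwalk_nth_ends:
  assumes "uwalk I F v p w" "k < length p"
  shows "fst (p ! k) \<in> F \<and> {tail I (fst (p!k)), head I (fst (p!k))} = {uverts I v p ! k, uverts I v p ! Suc k}"
proof -
  obtain g d where "p ! k = (g,d)" by force
  then show ?thesis using uwalk_nth[OF assms] by (auto split: if_splits)
qed

lemma uwalk_nodes:
  assumes "wf_inst I" "F \<subseteq> edges I"
  shows "uwalk I F v p w \<Longrightarrow> v \<in> nodes I \<Longrightarrow> set (uverts I v p) \<subseteq> nodes I"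
  using assms
proof (induction I F v p w rule: uwalk.induct)
  case (1 I F v w) then show ?case by simp
next
  case (2 I' F' v g d p w)
  have "tail I' g \<in> nodes I' \<and> head I' g \<in> nodes I'" using 2 by (auto simp: wf_inst_def)
  then show ?case using 2 by (auto split: if_splits)
qed

lemma path_distinct_edges:
  assumes w: "uwalk I F v p w" and dv: "distinct (uverts I v p)"
  shows "distinct (map fst p)"
proof -
  have "fst (p!j) \<noteq> fst (p!k)" if jk: "j < k" "k < length p" for j k
  proof
    assume eq: "fst (p!j) = fst (p!k)"
    have "uverts I v p ! j \<in> {uverts I v p ! k, uverts I v p ! Suc k}"
      using uwalk_nth_ends[OF w, of j] uwalk_nth_ends[OF w, of k] jk eq by auto
    moreover have "uverts I v p ! j \<noteq> uverts I v p ! k" "uverts I v p ! j \<noteq> uverts I v p ! Suc k"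
      using dv jk by (simp_all add: nth_eq_iff_index_eq)
    ultimately show False by auto
  qed
  then show ?thesis
    by (auto simp: distinct_conv_nth) (metis linorder_neqE_nat)
qed

lemma walk_to_path:
  "uwalk I F v p w \<Longrightarrow> \<exists>q. uwalk I F v q w \<and> distinct (uverts I v q)"
proof (induction "length p" arbitrary: p rule: less_induct)
  case less
  show ?case
  proof (cases "distinct (uverts I v p)")
    case True then show ?thesis using less.prems by blast
  next
    case False
    then obtain i j where ij: "i < j" "j \<le> length p" "uverts I v p ! i = uverts I v p ! j"
      by (auto simp: distinct_conv_nth) (metis less_Suc_eq_le linorder_neqE_nat)
    have t: "uwalk I F v (take i p) (uverts I v p ! i)"
      using uwalk_take_drop[OF less.prems, of i] ij by simp
    have d: "uwalk I F (uverts I v p ! j) (drop j p) w"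
      using uwalk_take_drop[OF less.prems, of j] ij by simp
    have "uwalk I F v (take i p @ drop j p) w" using t d ij(3) uwalk_append by metis
    moreover have "length (take i p @ drop j p) < length p" using ij by simp
    ultimately show ?thesis using less.hyps by blast
  qed
qed

lemma path_eq_if_same_edge_set:
  "uwalk I F v p w \<Longrightarrow> uwalk I F' v q w' \<Longrightarrow> distinct (uverts I v p) \<Longrightarrow>
   distinct (uverts I v q) \<Longrightarrow> set p = set q \<Longrightarrow> p = q"
proof (induction p arbitrary: v q w')
  case Nil then show ?case by simp
next
  case (Cons a p)
  obtain g d where a: "a = (g,d)" by force
  obtain b q' where q: "q = b # q'" using Cons.prems(5) by (cases q) auto
  obtain h e where b: "b = (h,e)" by force
  have ab: "b = a"
  proof (rule ccontr)
    assume ne: "b \<noteq> a"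
    then have "b \<in> set p" using Cons.prems(5) q by auto
    then obtain k where k: "k < length p" "p ! k = b" by (auto simp: in_set_conv_nth)
    have "(a#p) ! Suc k = (h,e)" using k b by simp
    from uwalk_nth[OF Cons.prems(1) _ this] k
    have s: "(if e then tail I h = uverts I v (a#p) ! Suc k else head I h = uverts I v (a#p) ! Suc k)"
      by (auto split: if_splits)
    have "(if e then tail I h = v else head I h = v)" using Cons.prems(2) q b by (auto split: if_splits)
    then have "uverts I v (a#p) ! Suc k = uverts I v (a#p) ! 0" using s by (auto split: if_splits)
    then show False using Cons.prems(3) k nth_eq_iff_index_eq[of "uverts I v (a#p)" "Suc k" 0] by simp
  qed
  have dp: "distinct (a#p)" using path_distinct_edges[OF Cons.prems(1,3)] distinct_map by blast
  have dq: "distinct q" using path_distinct_edges[OF Cons.prems(2,4)] distinct_map by blast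
  have sp: "set p = set q'" using Cons.prems(5) q ab dp dq by auto
  define u where "u = (if d then head I g else tail I g)"
  have w1: "uwalk I F u p w" using Cons.prems(1) a by (auto simp: u_def split: if_splits)
  have w2: "uwalk I F' u q' w'" using Cons.prems(2) a q ab by (auto simp: u_def split: if_splits)
  have d1: "distinct (uverts I u p)" using Cons.prems(3) a by (simp add: u_def)
  have d2: "distinct (uverts I u q')" using Cons.prems(4) a q ab by (simp add: u_def)
  show ?case using Cons.IH[OF w1 w2 d1 d2 sp] q ab by simp
qed

definition rev_walk :: "('e \<times> bool) list \<Rightarrow> ('e \<times> bool) list" where
  "rev_walk p = rev (map (\<lambda>(g,d). (g, \<not> d)) p)"

lemma uwalk_rev_walk: "uwalk I F v p w \<Longrightarrow> uwalk I F w (rev_walk p) v"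
proof (induction p arbitrary: v)
  case Nil then show ?case by (simp add: rev_walk_def)
next
  case (Cons a p)
  obtain g d where a: "a = (g,d)" by force
  show ?case using Cons a by (auto simp: rev_walk_def uwalk_append split: if_splits)
qed

lemma uwalk_reroute:
  assumes "uwalk I F v p w"
    and "\<And>g. g \<in> F \<Longrightarrow> g \<notin> F' \<Longrightarrow> \<exists>q. uwalk I F' (tail I g) q (head I g)"
  shows "\<exists>q. uwalk I F' v q w"
  using assms(1)
proof (induction p arbitrary: v)
  case Nil then show ?case by (metis uwalk.simps(1))
next
  case (Cons a p)
  obtain g d where a: "a = (g,d)" by force
  have gF: "g \<in> F" using Cons.prems a by simp
  have bridge: "\<exists>q. uwalk I F' (tail I g) q (head I g)" "\<exists>q. uwalk I F' (head I g) q (tail I g)"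
  proof -
    show "\<exists>q. uwalk I F' (tail I g) q (head I g)"
    proof (cases "g \<in> F'")
      case True then have "uwalk I F' (tail I g) [(g,True)] (head I g)" by simp
      then show ?thesis by blast
    next
      case False then show ?thesis using assms(2) gF by blast
    qed
    then obtain q where "uwalk I F' (tail I g) q (head I g)" by blast
    then have "uwalk I F' (head I g) (rev_walk q) (tail I g)" by (rule uwalk_rev_walk)
    then show "\<exists>q. uwalk I F' (head I g) q (tail I g)" by blast
  qed
  show ?case
  proof (cases d)
    case True
    then have "tail I g = v" "uwalk I F (head I g) p w" using Cons.prems a by auto
    then show ?thesis using Cons.IH bridge uwalk_append by metis
  next
    case False
    then have "head I g = v" "uwalk I F (tail I g) p w" using Cons.prems a by auto
    then show ?thesis using Cons.IH bridge uwalk_append by metis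
  qed
qed

lemma ucycle_edges_subset: "ucycle_at I F v p \<Longrightarrow> fst ` set p \<subseteq> F"
  using uwalk_edges_subset[of I F v p v] unfolding ucycle_at_def by blast

lemma ucycle_minus_edge_walk:
  assumes C: "ucycle_at I F v C" and g: "g \<in> fst ` set C"
  shows "\<exists>q. uwalk I (F - {g}) (tail I g) q (head I g)"
proof -
  obtain k where k: "k < length C" "fst (C ! k) = g" using g by (auto simp: in_set_conv_nth)
  have Cw: "uwalk I F v C v" and dC: "distinct (map fst C)"
    using C by (auto simp: ucycle_at_def)
  let ?vk = "uverts I v C ! k" and ?vk1 = "uverts I v C ! Suc k"
  have w1: "uwalk I F v (take k C) ?vk"
    using uwalk_take_drop[OF Cw, of k] k by simp
  have w2: "uwalk I F ?vk1 (drop (Suc k) C) v"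
    using uwalk_take_drop[OF Cw, of "Suc k"] k by simp
  have ends: "{tail I g, head I g} = {?vk, ?vk1}" using uwalk_nth_ends[OF Cw k(1)] k(2) by simp
  have "distinct (map fst (take k C @ C ! k # drop (Suc k) C))"
    using dC k(1) by (simp add: id_take_nth_drop[symmetric])
  then have "g \<notin> fst ` set (take k C)" "g \<notin> fst ` set (drop (Suc k) C)" using k(2) by auto
  then have sub: "fst ` set (drop (Suc k) C @ take k C) \<subseteq> F - {g}"
    using uwalk_edges_subset[OF w1] uwalk_edges_subset[OF w2] by auto
  have "uwalk I F ?vk1 (drop (Suc k) C @ take k C) ?vk"
    using w1 w2 uwalk_append[of I F ?vk1 "drop (Suc k) C" "take k C" ?vk] by blast
  from uwalk_restrict[OF this sub]
  have Qw: "uwalk I (F - {g}) ?vk1 (drop (Suc k) C @ take k C) ?vk" .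
  show ?thesis
  proof (cases "tail I g = head I g")
    case True
    then have "uwalk I (F - {g}) (tail I g) [] (head I g)" by simp
    then show ?thesis by blast
  next
    case False
    then have "tail I g = ?vk \<and> head I g = ?vk1 \<or> tail I g = ?vk1 \<and> head I g = ?vk"
      using ends by (auto simp: doubleton_eq_iff)
    then show ?thesis using Qw uwalk_rev_walk[OF Qw] by metis
  qed
qed

lemma path_close_cycle:
  assumes P: "uwalk I S v P w" "distinct (uverts I v P)" "P = (g, d) # P'"
    and h: "h \<in> S" "h \<noteq> g" "tail I h = v \<or> head I h = v"
    and y: "y = (if head I h = v then tail I h else head I h)" "y \<in> set (uverts I v P)"
  shows "\<exists>C. ucycle_at I S y C"
proof -
  define d' where "d' = (head I h = v)"
  have hw: "uwalk I S y [(h, d')] v" using h y(1) by (auto simp: d'_def)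
  obtain i where i: "i < Suc (length P)" "uverts I v P ! i = y"
    using y(2) by (metis in_set_conv_nth uverts_length)
  have "uwalk I S v (take i P) y" using uwalk_take_drop[OF P(1), of i] i by simp
  then have Cw: "uwalk I S y ((h, d') # take i P) y"
    using hw uwalk_append[of I S y "[(h, d')]" "take i P" y] by (metis append_Cons append_Nil)
  have "h \<notin> fst ` set (take i P)"
  proof
    assume "h \<in> fst ` set (take i P)"
    then obtain k where k: "k < i" "k < length P" "fst (P ! k) = h"
      by (auto simp: in_set_conv_nth)
    have "{tail I h, head I h} = {uverts I v P ! k, uverts I v P ! Suc k}"
      using uwalk_nth_ends[OF P(1) k(2)] k(3) by simp
    then have "v \<in> {uverts I v P ! k, uverts I v P ! Suc k}" using h(3) by auto
    then have "k = 0"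
      using P(2) k nth_eq_iff_index_eq[of "uverts I v P" k 0]
        nth_eq_iff_index_eq[of "uverts I v P" "Suc k" 0] by auto
    then show False using k h(2) P(3) by simp
  qed
  moreover have "distinct (map fst P)" using path_distinct_edges[OF P(1,2)] .
  ultimately have "distinct (map fst ((h, d') # take i P))"
    by (simp add: distinct_take take_map[symmetric]) (metis set_map take_map)
  moreover have "tl (uverts I y ((h, d') # take i P)) = take (Suc i) (uverts I v P)"
    using h(3) y(1) uverts_take[of i P I v] i by (auto simp: d'_def)
  ultimately have "ucycle_at I S y ((h, d') # take i P)"
    unfolding ucycle_at_def using Cw P(2) by simp
  then show ?thesis by blast
qed

text \<open>Extend a path backwards at its start vertex until it runs into itself; the path length
  is bounded by the number of nodes.\<close>

lemma cycle_if_no_leaf: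
  assumes wf: "wf_inst I" and SE: "S \<subseteq> edges I"
    and noloop: "\<And>g. g \<in> S \<Longrightarrow> tail I g \<noteq> head I g"
    and deg: "\<And>g v. g \<in> S \<Longrightarrow> tail I g = v \<or> head I g = v \<Longrightarrow>
      \<exists>h\<in>S. h \<noteq> g \<and> (tail I h = v \<or> head I h = v)"
  shows "uwalk I S v P w \<Longrightarrow> P \<noteq> [] \<Longrightarrow> distinct (uverts I v P) \<Longrightarrow> \<exists>y C. ucycle_at I S y C"
proof (induction "card (nodes I) - length P" arbitrary: v P rule: less_induct)
  case less
  have fin: "finite (nodes I)" using wf by (simp add: wf_inst_def)
  obtain g d P' where P: "P = (g, d) # P'" using less.prems(2) by (metis list.exhaust prod.exhaust)
  have gS: "g \<in> S" using less.prems(1) P by simp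
  have vinc: "tail I g = v \<or> head I g = v" using less.prems(1) P by (auto split: if_splits)
  have "v \<in> nodes I" using vinc gS SE wf by (auto simp: wf_inst_def)
  then have VN: "set (uverts I v P) \<subseteq> nodes I" by (rule uwalk_nodes[OF wf SE less.prems(1)])
  have lenP: "Suc (length P) \<le> card (nodes I)"
    using card_mono[OF fin VN] distinct_card[OF less.prems(3)] by simp
  obtain h where h: "h \<in> S" "h \<noteq> g" "tail I h = v \<or> head I h = v"
    using deg[OF gS vinc] by blast
  define y where "y = (if head I h = v then tail I h else head I h)"
  show ?case
  proof (cases "y \<in> set (uverts I v P)")
    case False
    have "uwalk I S y [(h, head I h = v)] v" using h(1,3) by (auto simp: y_def)
    then have w: "uwalk I S y ((h, head I h = v) # P) w"
      using less.prems(1) uwalk_append[of I S y "[(h, head I h = v)]" P w] by auto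
    have d: "distinct (uverts I y ((h, head I h = v) # P))"
      using False less.prems(3) h(3) by (auto simp: y_def)
    show ?thesis using less.hyps[OF _ w _ d] lenP by simp
  next
    case True
    then show ?thesis using path_close_cycle[OF less.prems(1,3) P h y_def] by blast
  qed
qed

section \<open>Circulations\<close>

definition circulation :: "('v, 'e, 'z) bmcf_scheme \<Rightarrow> ('e \<Rightarrow> real) \<Rightarrow> bool" where
  "circulation I z \<longleftrightarrow> (\<forall>v\<in>nodes I. (\<Sum>g\<in>{g\<in>edges I. head I g = v}. z g) = (\<Sum>g\<in>{g\<in>edges I. tail I g = v}. z g))"

lemma chi_Nil[simp]: "chi [] g = 0" by (simp add: chi_def)

lemma chi_zero: "h \<notin> fst ` set p \<Longrightarrow> chi p h = 0"
  by (force simp: chi_def image_iff)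

lemma chi_Cons: "g \<notin> fst ` set p \<Longrightarrow>
   chi ((g,d)#p) h = chi p h + (if h = g then (if d then 1 else -1) else 0)"
  using chi_zero[of g p] by (auto simp: chi_def image_iff)

lemma chi_set:
  assumes "distinct (map fst p)"
  shows "((h,True) \<in> set p \<longleftrightarrow> chi p h = 1) \<and> ((h,False) \<in> set p \<longleftrightarrow> chi p h = -1)"
proof -
  have "\<not> ((h,True) \<in> set p \<and> (h,False) \<in> set p)"
  proof
    assume a: "(h,True) \<in> set p \<and> (h,False) \<in> set p"
    then obtain i j where "i < length p" "j < length p" "p!i = (h,True)" "p!j = (h,False)"
      by (metis in_set_conv_nth)
    moreover then have "i \<noteq> j" by auto
    ultimately show False using assms by (simp add: distinct_conv_nth) (metis fst_conv)
  qed
  then show ?thesis by (auto simp: chi_def)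
qed

lemma chi_nonzero: "h \<in> fst ` set p \<Longrightarrow> chi p h \<noteq> 0"
  by (auto simp: chi_def) (metis (full_types))

lemma set_eq_if_chi_eq:
  assumes "distinct (map fst p)" "distinct (map fst q)" "chi p = chi q"
  shows "set p = set q"
proof -
  have "(g, b) \<in> set p \<longleftrightarrow> (g, b) \<in> set q" for g b
    using chi_set[OF assms(1), of g] chi_set[OF assms(2), of g] assms(3) by (cases b) auto
  then show ?thesis by auto
qed

lemma walk_net_flow:
  assumes fin: "finite (edges I)" and F: "F \<subseteq> edges I"
  shows "uwalk I F v p w \<Longrightarrow> distinct (map fst p) \<Longrightarrow>
    (\<Sum>g\<in>{g\<in>edges I. head I g = x}. chi p g) - (\<Sum>g\<in>{g\<in>edges I. tail I g = x}. chi p g)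
     = (if x = w then 1 else 0) - (if x = v then 1 else 0)"
proof (induction p arbitrary: v)
  case Nil then show ?case by simp
next
  case (Cons a p)
  obtain g d where a: "a = (g,d)" by force
  have gE: "g \<in> edges I" using Cons.prems a F by auto
  have gp: "g \<notin> fst ` set p" "distinct (map fst p)" using Cons.prems a by auto
  let ?c = "(if d then 1 else -1) :: real"
  have ch: "chi (a#p) h = chi p h + (if h = g then ?c else 0)" for h
    using chi_Cons[OF gp(1)] a by simp
  have s1: "(\<Sum>h\<in>{h\<in>edges I. head I h = x}. chi (a#p) h) =
     (\<Sum>h\<in>{h\<in>edges I. head I h = x}. chi p h) + (if head I g = x then ?c else 0)"
    using fin gE by (simp add: ch sum.distrib sum.delta)
  have s2: "(\<Sum>h\<in>{h\<in>edges I. tail I h = x}. chi (a#p) h) =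
     (\<Sum>h\<in>{h\<in>edges I. tail I h = x}. chi p h) + (if tail I g = x then ?c else 0)"
    using fin gE by (simp add: ch sum.distrib sum.delta)
  show ?case
  proof (cases d)
    case True
    then have "tail I g = v" "uwalk I F (head I g) p w" using Cons.prems a by auto
    then have "(\<Sum>g\<in>{g\<in>edges I. head I g = x}. chi p g) - (\<Sum>g\<in>{g\<in>edges I. tail I g = x}. chi p g)
     = (if x = w then 1 else 0) - (if x = head I g then 1 else 0)" using Cons.IH[OF _ gp(2)] by blast
    then show ?thesis using s1 s2 True \<open>tail I g = v\<close> by auto
  next
    case False
    then have "head I g = v" "uwalk I F (tail I g) p w" using Cons.prems a by auto
    then have "(\<Sum>g\<in>{g\<in>edges I. head I g = x}. chi p g) - (\<Sum>g\<in>{g\<in>edges I. tail I g = x}. chi p g)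
     = (if x = w then 1 else 0) - (if x = tail I g then 1 else 0)" using Cons.IH[OF _ gp(2)] by blast
    then show ?thesis using s1 s2 False \<open>head I g = v\<close> by auto
  qed
qed

lemma circulation_chi_cycle:
  assumes "finite (edges I)" "F \<subseteq> edges I" "ucycle_at I F v p"
  shows "circulation I (chi p)"
  using walk_net_flow[OF assms(1,2), of v p v] assms(3) unfolding ucycle_at_def circulation_def by auto

lemma circulation_diff: "circulation I z \<Longrightarrow> circulation I y \<Longrightarrow> circulation I (\<lambda>g. z g - a * y g)"
  by (simp add: circulation_def sum_subtractf sum_distrib_left[symmetric])

lemma circulation_add: "circulation I z \<Longrightarrow> circulation I y \<Longrightarrow> circulation I (\<lambda>g. z g + a * y g)"
  by (simp add: circulation_def sum.distrib sum_distrib_left[symmetric])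

lemma circulation_scale: "circulation I z \<Longrightarrow> circulation I (\<lambda>g. a * z g)"
  by (simp add: circulation_def sum_distrib_left[symmetric])

lemma circulation_sum:
  assumes "\<And>f. f \<in> F \<Longrightarrow> circulation I (z f)"
  shows "circulation I (\<lambda>g. \<Sum>f\<in>F. z f g)"
  unfolding circulation_def
proof
  fix v assume v: "v \<in> nodes I"
  have "(\<Sum>g\<in>{g\<in>edges I. head I g = v}. \<Sum>f\<in>F. z f g) = (\<Sum>f\<in>F. \<Sum>g\<in>{g\<in>edges I. head I g = v}. z f g)"
    by (rule sum.swap)
  also have "\<dots> = (\<Sum>f\<in>F. \<Sum>g\<in>{g\<in>edges I. tail I g = v}. z f g)"
    using assms v by (auto simp: circulation_def intro: sum.cong)
  also have "\<dots> = (\<Sum>g\<in>{g\<in>edges I. tail I g = v}. \<Sum>f\<in>F. z f g)"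
    by (rule sum.swap)
  finally show "(\<Sum>g\<in>{g\<in>edges I. head I g = v}. \<Sum>f\<in>F. z f g) = (\<Sum>g\<in>{g\<in>edges I. tail I g = v}. \<Sum>f\<in>F. z f g)" .
qed

lemma circulation_support_no_leaf:
  assumes wf: "wf_inst I" and c: "circulation I z"
    and g: "g \<in> edges I" "z g \<noteq> 0" "tail I g \<noteq> head I g" and v: "tail I g = v \<or> head I g = v"
  shows "\<exists>h\<in>edges I. h \<noteq> g \<and> z h \<noteq> 0 \<and> (tail I h = v \<or> head I h = v)"
proof (rule ccontr)
  assume no: "\<not> ?thesis"
  have fin: "finite (edges I)" using wf by (simp add: wf_inst_def)
  have vN: "v \<in> nodes I" using v g(1) wf by (auto simp: wf_inst_def)
  have sum_at: "(\<Sum>h\<in>{h\<in>edges I. endp h = v}. z h) = (if endp g = v then z g else 0)"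
    if "endp = head I \<or> endp = tail I" for endp
  proof -
    have "(\<Sum>h\<in>{h\<in>edges I. endp h = v}. z h) = (\<Sum>h\<in>{h\<in>edges I. endp h = v}. if h = g then z g else 0)"
      by (rule sum.cong) (use no that in auto)
    then show ?thesis using fin g(1) by (simp add: sum.delta)
  qed
  have "(\<Sum>h\<in>{h\<in>edges I. head I h = v}. z h) = (\<Sum>h\<in>{h\<in>edges I. tail I h = v}. z h)"
    using c vN unfolding circulation_def by blast
  then show False using sum_at[of "head I"] sum_at[of "tail I"] g v by (auto split: if_splits)
qed

lemma circulation_zero_if_acyclic_support:
  assumes wf: "wf_inst I" and acyc: "\<not> (\<exists>v p. ucycle_at I F v p)"
    and c: "circulation I z" and out: "\<And>g. g \<in> edges I \<Longrightarrow> g \<notin> F \<Longrightarrow> z g = 0"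
    and g0: "g0 \<in> edges I"
  shows "z g0 = 0"
proof (rule ccontr)
  assume nz: "z g0 \<noteq> 0"
  define S where "S = {g\<in>edges I. z g \<noteq> 0}"
  have no_cycle: "\<not> ucycle_at I S y C" for y C
  proof
    assume "ucycle_at I S y C"
    then have "ucycle_at I F y C"
      unfolding ucycle_at_def using uwalk_mono[of I S y C y F] out by (force simp: S_def)
    then show False using acyc by blast
  qed
  show False
  proof (cases "\<exists>g\<in>S. tail I g = head I g")
    case True
    then obtain g where "g \<in> S" "tail I g = head I g" by blast
    then have "ucycle_at I S (tail I g) [(g, True)]" by (simp add: ucycle_at_def)
    then show False using no_cycle by blast
  next
    case False
    have SE: "S \<subseteq> edges I" by (auto simp: S_def)
    have noloop: "\<And>g. g \<in> S \<Longrightarrow> tail I g \<noteq> head I g" using False by blast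
    have deg: "\<exists>h\<in>S. h \<noteq> g \<and> (tail I h = v \<or> head I h = v)"
      if "g \<in> S" "tail I g = v \<or> head I g = v" for g v
      using circulation_support_no_leaf[OF wf c _ _ _ that(2)] that(1) noloop[OF that(1)]
      by (auto simp: S_def)
    have "uwalk I S (tail I g0) [(g0, True)] (head I g0)"
      and "distinct (uverts I (tail I g0) [(g0, True)])"
      using False g0 nz by (auto simp: S_def)
    then obtain y C where "ucycle_at I S y C"
      using cycle_if_no_leaf[OF wf SE noloop deg] by blast
    then show False using no_cycle by blast
  qed
qed

lemma sum_regroup_by_endpoint:
  fixes p :: "'v \<Rightarrow> real" and z :: "'e \<Rightarrow> real"
  assumes wf: "wf_inst I" and h: "h ` edges I \<subseteq> nodes I"
  shows "(\<Sum>g\<in>edges I. p (h g) * z g) = (\<Sum>v\<in>nodes I. p v * (\<Sum>g\<in>{g\<in>edges I. h g = v}. z g))"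
proof -
  have fin: "finite (edges I)" "finite (nodes I)" using wf by (auto simp: wf_inst_def)
  have "(\<Sum>g\<in>edges I. p (h g) * z g) = (\<Sum>v\<in>nodes I. \<Sum>g\<in>{g\<in>edges I. h g = v}. p (h g) * z g)"
    using sum.group[OF fin, of h "\<lambda>g. p (h g) * z g"] h by simp
  also have "\<dots> = (\<Sum>v\<in>nodes I. p v * (\<Sum>g\<in>{g\<in>edges I. h g = v}. z g))"
    by (rule sum.cong) (auto simp: sum_distrib_left intro: sum.cong)
  finally show ?thesis .
qed

lemma circulation_reduced_weight:
  assumes wf: "wf_inst I" and c: "circulation I z"
  shows "(\<Sum>g\<in>edges I. reduced I w p g * z g) = (\<Sum>g\<in>edges I. w g * z g)"
proof -
  have "(\<Sum>g\<in>edges I. p (head I g) * z g) = (\<Sum>v\<in>nodes I. p v * (\<Sum>g\<in>{g\<in>edges I. head I g = v}. z g))"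
    by (rule sum_regroup_by_endpoint) (use wf in \<open>auto simp: wf_inst_def\<close>)
  also have "\<dots> = (\<Sum>v\<in>nodes I. p v * (\<Sum>g\<in>{g\<in>edges I. tail I g = v}. z g))"
    using c by (auto simp: circulation_def intro: sum.cong)
  also have "\<dots> = (\<Sum>g\<in>edges I. p (tail I g) * z g)"
    by (rule sum_regroup_by_endpoint[symmetric]) (use wf in \<open>auto simp: wf_inst_def\<close>)
  finally have eq: "(\<Sum>g\<in>edges I. p (head I g) * z g) = (\<Sum>g\<in>edges I. p (tail I g) * z g)" .
  have "(\<Sum>g\<in>edges I. reduced I w p g * z g) =
     (\<Sum>g\<in>edges I. w g * z g) - (\<Sum>g\<in>edges I. p (tail I g) * z g) + (\<Sum>g\<in>edges I. p (head I g) * z g)"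
    by (simp add: reduced_def algebra_simps sum.distrib sum_subtractf)
  then show ?thesis using eq by simp
qed

section \<open>Fundamental cycles of a spanning tree\<close>

locale spanning_tree_inst =
  fixes I :: "('v, 'e, 'z) bmcf_scheme" and T :: "'e set"
  assumes wf: "wf_inst I" and st: "spanning_tree I T"
begin

lemma finite_edges: "finite (edges I)"
  using wf by (simp add: wf_inst_def)

lemma tree_subset_edges: "T \<subseteq> edges I"
  using st by (simp add: spanning_tree_def)

lemma circulation_zero_off_tree:
  assumes "circulation I z" "\<And>g. g \<in> edges I \<Longrightarrow> g \<notin> T \<Longrightarrow> z g = 0" "g \<in> edges I"
  shows "z g = 0"
  using circulation_zero_if_acyclic_support[of I T z g] wf st assms by (simp add: spanning_tree_def)

lemma fcycle_exists:
  assumes f: "f \<in> edges I" "f \<notin> T"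
  shows "\<exists>p. ucycle_at I (insert f T) (tail I f) p \<and> hd p = (f, True)"
proof -
  have "tail I f \<in> nodes I" "head I f \<in> nodes I" using f(1) wf by (auto simp: wf_inst_def)
  then obtain q0 where "uwalk I T (head I f) q0 (tail I f)"
    using st unfolding spanning_tree_def by blast
  then obtain q where q: "uwalk I T (head I f) q (tail I f)" "distinct (uverts I (head I f) q)"
    using walk_to_path[of I T "head I f" q0 "tail I f"] by blast
  have "uwalk I (insert f T) (head I f) q (tail I f)" using uwalk_mono[OF q(1)] by blast
  moreover have "distinct (map fst q)" using path_distinct_edges[OF q] .
  ultimately have "ucycle_at I (insert f T) (tail I f) ((f, True) # q)"
    using uwalk_edges_subset[OF q(1)] f q(2) by (auto simp: ucycle_at_def)
  then show ?thesis by fastforce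
qed

text \<open>Two such cycles carry circulations agreeing off T, so by acyclicity of T they have the
  same edges with the same orientations; a path is determined by its set of oriented edges.\<close>

lemma fcycle_unique:
  assumes f: "f \<in> edges I" "f \<notin> T"
    and p: "ucycle_at I (insert f T) (tail I f) p" "hd p = (f, True)"
    and q: "ucycle_at I (insert f T) (tail I f) q" "hd q = (f, True)"
  shows "p = q"
proof -
  obtain p' where p': "p = (f, True) # p'" using p by (cases p) (auto simp: ucycle_at_def)
  obtain q' where q': "q = (f, True) # q'" using q by (cases q) (auto simp: ucycle_at_def)
  have FE: "insert f T \<subseteq> edges I" using f tree_subset_edges by blast
  have dp: "distinct (map fst p)" and dq: "distinct (map fst q)"
    using p q by (auto simp: ucycle_at_def)
  have off_tree: "chi p h - 1 * chi q h = 0" if "h \<notin> T" for h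
  proof (cases "h = f")
    case True
    then have "chi p h = 1" "chi q h = 1"
      using chi_set[OF dp, of f] chi_set[OF dq, of f] p' q' by auto
    then show ?thesis by simp
  next
    case False
    then have "h \<notin> fst ` set p" "h \<notin> fst ` set q"
      using ucycle_edges_subset[OF p(1)] ucycle_edges_subset[OF q(1)] that by auto
    then show ?thesis by (simp add: chi_zero)
  qed
  have circ: "circulation I (\<lambda>g. chi p g - 1 * chi q g)"
    by (rule circulation_diff[OF circulation_chi_cycle[OF finite_edges FE p(1)]
          circulation_chi_cycle[OF finite_edges FE q(1)]])
  have "chi p g - 1 * chi q g = 0" for g
  proof (cases "g \<in> edges I")
    case True then show ?thesis using circulation_zero_off_tree[OF circ _ True] off_tree by blast
  next
    case False then show ?thesis using off_tree tree_subset_edges by blast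
  qed
  then have "chi p = chi q" by (simp add: fun_eq_iff)
  then have "set p = set q" by (rule set_eq_if_chi_eq[OF dp dq])
  moreover have "(f, True) \<notin> set p'" "(f, True) \<notin> set q'" using dp dq p' q' by force+
  ultimately have "set p' = set q'" using p' q' by (metis insert_ident list.set(2))
  moreover have "uwalk I (insert f T) (head I f) p' (tail I f)" "distinct (uverts I (head I f) p')"
    "uwalk I (insert f T) (head I f) q' (tail I f)" "distinct (uverts I (head I f) q')"
    using p(1) q(1) p' q' by (auto simp: ucycle_at_def)
  ultimately show ?thesis using path_eq_if_same_edge_set[of I _ _ p' _ _ q'] p' q' by blast
qed

lemma fcycle_cycle:
  assumes f: "f \<in> edges I" "f \<notin> T"
  shows "ucycle_at I (insert f T) (tail I f) (fcycle I T f) \<and> hd (fcycle I T f) = (f, True)"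
proof -
  have "\<exists>!p. ucycle_at I (insert f T) (tail I f) p \<and> hd p = (f, True)"
    using fcycle_exists[OF f] fcycle_unique[OF f] by blast
  then show ?thesis unfolding fcycle_def by (rule theI')
qed

lemma circulation_fcycle: "f \<in> edges I \<Longrightarrow> f \<notin> T \<Longrightarrow> circulation I (chi (fcycle I T f))"
  using fcycle_cycle circulation_chi_cycle[OF finite_edges, of "insert f T"] tree_subset_edges by blast

lemma chi_fcycle_self: "f \<in> edges I \<Longrightarrow> f \<notin> T \<Longrightarrow> chi (fcycle I T f) f = 1"
  using fcycle_cycle[of f] chi_set[of "fcycle I T f" f]
  by (cases "fcycle I T f") (auto simp: ucycle_at_def)

lemma chi_fcycle_outside:
  assumes "f \<in> edges I" "f \<notin> T" "g \<notin> insert f T"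
  shows "chi (fcycle I T f) g = 0"
proof -
  have "fst ` set (fcycle I T f) \<subseteq> insert f T"
    using fcycle_cycle[OF assms(1,2)] ucycle_edges_subset by metis
  then have "g \<notin> fst ` set (fcycle I T f)" using assms(3) by blast
  then show ?thesis by (rule chi_zero)
qed

lemma chi_fcycle_nontree:
  "f \<in> edges I \<Longrightarrow> f \<notin> T \<Longrightarrow> g \<notin> T \<Longrightarrow> chi (fcycle I T f) g = (if g = f then 1 else 0)"
  by (cases "g = f") (simp_all add: chi_fcycle_self chi_fcycle_outside)

lemma circulation_eq_sum_fcycles:
  assumes w: "circulation I w" and F: "F \<subseteq> edges I - T"
    and supp: "\<And>h. h \<in> edges I \<Longrightarrow> h \<notin> T \<Longrightarrow> h \<notin> F \<Longrightarrow> w h = 0" and g: "g \<in> edges I"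
  shows "w g = (\<Sum>f\<in>F. w f * chi (fcycle I T f) g)"
proof -
  have finF: "finite F" using F finite_edges finite_subset by blast
  have "circulation I (\<lambda>h. w h - 1 * (\<Sum>f\<in>F. w f * chi (fcycle I T f) h))"
    using F by (intro circulation_diff[OF w] circulation_sum circulation_scale circulation_fcycle) auto
  moreover have "(\<Sum>f\<in>F. w f * chi (fcycle I T f) h) = w h" if "h \<in> edges I" "h \<notin> T" for h
  proof -
    have "(\<Sum>f\<in>F. w f * chi (fcycle I T f) h) = (\<Sum>f\<in>F. if f = h then w h else 0)"
      by (rule sum.cong) (use F that chi_fcycle_nontree in auto)
    then show ?thesis using finF supp[OF that] by auto
  qed
  ultimately show ?thesis using circulation_zero_off_tree[OF _ _ g] by fastforce
qed

lemma reduced_eq_fcycle_sum: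
  assumes f: "f \<in> edges I" "f \<notin> T" and pot: "is_potential I T r w p"
  shows "reduced I w p f = (\<Sum>g\<in>edges I. w g * chi (fcycle I T f) g)"
proof -
  have "(\<Sum>g\<in>edges I. w g * chi (fcycle I T f) g) =
      (\<Sum>g\<in>edges I. reduced I w p g * chi (fcycle I T f) g)"
    using circulation_reduced_weight[OF wf circulation_fcycle[OF f]] by simp
  also have "\<dots> = (\<Sum>g\<in>edges I. if g = f then reduced I w p f else 0)"
    by (rule sum.cong) (use pot chi_fcycle_nontree[OF f] in \<open>auto simp: is_potential_def\<close>)
  also have "\<dots> = reduced I w p f" using finite_edges f by (simp add: sum.delta')
  finally show ?thesis by simp
qed

text \<open>A cycle in the exchanged tree is a circulation vanishing off T \<union> {f}, hence a multiple of
  C(f); vanishing at e', where C(f) does not, it is zero.\<close>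

lemma exchange_acyclic:
  assumes f: "f \<in> edges I" "f \<notin> T" and nz: "chi (fcycle I T f) e' \<noteq> 0"
  shows "\<not> ucycle_at I (T \<union> {f} - {e'}) v Q"
proof
  assume Q: "ucycle_at I (T \<union> {f} - {e'}) v Q"
  define w where "w = chi Q"
  have QT': "fst ` set Q \<subseteq> T \<union> {f} - {e'}" using ucycle_edges_subset[OF Q] .
  have circ: "circulation I w"
    unfolding w_def by (rule circulation_chi_cycle[OF finite_edges _ Q]) (use f tree_subset_edges in auto)
  have supp: "w h = 0" if "h \<in> edges I" "h \<notin> T" "h \<notin> {f}" for h
  proof -
    have "h \<notin> fst ` set Q" using QT' that by blast
    then show ?thesis unfolding w_def by (rule chi_zero)
  qed
  have multiple: "w g = w f * chi (fcycle I T f) g" if "g \<in> edges I" for g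
    using circulation_eq_sum_fcycles[where F = "{f}", OF circ _ supp that] f by simp
  have "e' \<in> insert f T" using chi_fcycle_outside[OF f, of e'] nz by blast
  then have "e' \<in> edges I" using f tree_subset_edges by blast
  moreover have "e' \<notin> fst ` set Q" using QT' by blast
  then have "w e' = 0" unfolding w_def by (rule chi_zero)
  ultimately have "w f = 0" using multiple nz by simp
  obtain g b Q' where Qc: "Q = (g, b) # Q'" using Q by (cases Q) (auto simp: ucycle_at_def)
  have "g \<in> edges I" using QT' f tree_subset_edges Qc by auto
  then have "w g = 0" using multiple \<open>w f = 0\<close> by simp
  moreover have "w g \<noteq> 0" unfolding w_def by (rule chi_nonzero) (simp add: Qc)
  ultimately show False by simp
qed

lemma spanning_tree_exchange:
  assumes f: "f \<in> edges I" "f \<notin> T" and e': "e' \<in> T" and nz: "chi (fcycle I T f) e' \<noteq> 0"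
  shows "spanning_tree I (T \<union> {f} - {e'})"
proof -
  have "e' \<in> fst ` set (fcycle I T f)"
  proof (rule ccontr)
    assume "e' \<notin> fst ` set (fcycle I T f)"
    then have "chi (fcycle I T f) e' = 0" by (rule chi_zero)
    then show False using nz by simp
  qed
  then obtain q where q: "uwalk I (insert f T - {e'}) (tail I e') q (head I e')"
    using ucycle_minus_edge_walk[OF conjunct1[OF fcycle_cycle[OF f]]] by blast
  have bridge: "\<exists>q. uwalk I (T \<union> {f} - {e'}) (tail I g) q (head I g)"
    if "g \<in> T" "g \<notin> T \<union> {f} - {e'}" for g
  proof -
    have "g = e'" "T \<union> {f} - {e'} = insert f T - {e'}" using that by auto
    then show ?thesis using q by auto
  qed
  have "\<exists>p. uwalk I (T \<union> {f} - {e'}) v p w" if vw: "v \<in> nodes I" "w \<in> nodes I" for v w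
  proof -
    obtain p where "uwalk I T v p w" using st vw unfolding spanning_tree_def by blast
    then show ?thesis using bridge by (rule uwalk_reroute)
  qed
  then show ?thesis
    using exchange_acyclic[OF f nz] f tree_subset_edges by (auto simp: spanning_tree_def)
qed

end

section \<open>Basic solutions\<close>

context spanning_tree_inst
begin

lemma circulation_basic_sol: "is_basic_sol I L U x \<Longrightarrow> circulation I x"
  by (simp add: is_basic_sol_def circulation_def)

lemma basic_sol_unique:
  assumes eb: "eb \<in> edges I" "eb \<notin> T" and bc: "bC I T eb \<noteq> 0"
    and cover: "\<And>g. g \<in> edges I \<Longrightarrow> g \<notin> T \<Longrightarrow> g \<noteq> eb \<Longrightarrow> g \<in> L \<union> U"
    and x: "is_basic_sol I L U x" and y: "is_basic_sol I L U y"
  shows "x = y"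
proof -
  define z where "z = (\<lambda>g. x g - 1 * y g)"
  have circ: "circulation I z"
    unfolding z_def by (rule circulation_diff[OF circulation_basic_sol[OF x] circulation_basic_sol[OF y]])
  have supp: "z h = 0" if "h \<in> edges I" "h \<notin> T" "h \<notin> {eb}" for h
  proof -
    have "h \<in> L \<union> U" using cover that by blast
    then show ?thesis using x y by (auto simp: z_def is_basic_sol_def)
  qed
  have multiple: "z g = z eb * chi (fcycle I T eb) g" if "g \<in> edges I" for g
    using circulation_eq_sum_fcycles[where F = "{eb}", OF circ _ supp that] eb by simp
  have "0 = (\<Sum>g\<in>edges I. feer I g * x g) - (\<Sum>g\<in>edges I. feer I g * y g)"
    using x y by (simp add: is_basic_sol_def)
  also have "\<dots> = (\<Sum>g\<in>edges I. feer I g * z g)"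
    by (simp add: z_def algebra_simps sum_subtractf)
  also have "\<dots> = (\<Sum>g\<in>edges I. z eb * (feer I g * chi (fcycle I T eb) g))"
    by (rule sum.cong) (simp_all add: multiple)
  also have "\<dots> = z eb * bC I T eb" by (simp add: bC_def sum_distrib_left)
  finally have "z eb = 0" using bc by simp
  then have "x g = y g" for g
    using x y multiple[of g] by (cases "g \<in> edges I") (auto simp: z_def is_basic_sol_def)
  then show ?thesis by blast
qed

lemma circulation_with_capacities:
  assumes "U \<subseteq> edges I - T"
  shows "\<exists>y. circulation I y \<and> (\<forall>g\<in>U. y g = real (cap I g)) \<and> (\<forall>g. g \<notin> U \<longrightarrow> g \<notin> T \<longrightarrow> y g = 0)"
proof -
  define y where "y = (\<lambda>h. \<Sum>g\<in>U. real (cap I g) * chi (fcycle I T g) h)"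
  have finU: "finite U" using assms finite_edges finite_subset by blast
  have "circulation I y"
    unfolding y_def using assms by (intro circulation_sum circulation_scale circulation_fcycle) auto
  moreover have "y h = (if h \<in> U then real (cap I h) else 0)" if "h \<notin> T" for h
  proof -
    have "y h = (\<Sum>g\<in>U. if g = h then real (cap I h) else 0)"
      unfolding y_def by (rule sum.cong) (use assms that chi_fcycle_nontree in auto)
    then show ?thesis using finU by simp
  qed
  ultimately show ?thesis using assms by (intro exI[of _ y]) auto
qed

lemma basic_sol_exists:
  assumes eb: "eb \<in> edges I" "eb \<notin> T" and bc: "bC I T eb \<noteq> 0"
    and U: "U \<subseteq> edges I - T" "eb \<notin> U" and L: "L \<inter> (T \<union> U) = {}" "eb \<notin> L"
  shows "\<exists>x. is_basic_sol I L U x"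
proof -
  obtain y where y: "circulation I y" "\<forall>g\<in>U. y g = real (cap I g)"
    "\<forall>g. g \<notin> U \<longrightarrow> g \<notin> T \<longrightarrow> y g = 0"
    using circulation_with_capacities[OF U(1)] by blast
  define t where "t = (real (budget I) - (\<Sum>h\<in>edges I. feer I h * y h)) / bC I T eb"
  define x where "x = (\<lambda>h. y h + t * chi (fcycle I T eb) h)"
  have off_tree: "x h = y h" if "h \<notin> T" "h \<noteq> eb" for h
    using chi_fcycle_outside[OF eb, of h] that by (simp add: x_def)
  have "(\<Sum>h\<in>edges I. feer I h * x h) = (\<Sum>h\<in>edges I. feer I h * y h) + t * bC I T eb"
    by (simp add: x_def bC_def algebra_simps sum.distrib sum_distrib_left)
  then have budget: "(\<Sum>h\<in>edges I. feer I h * x h) = real (budget I)"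
    using bc by (simp add: t_def)
  have "circulation I x"
    unfolding x_def by (rule circulation_add[OF y(1) circulation_fcycle[OF eb]])
  moreover have "x g = 0" if "g \<in> L" for g
  proof -
    have "g \<notin> T" "g \<noteq> eb" "g \<notin> U" using L that by auto
    then show ?thesis using off_tree y(3) by simp
  qed
  moreover have "x g = real (cap I g)" if "g \<in> U" for g
  proof -
    have "g \<notin> T" "g \<noteq> eb" using U that by auto
    then show ?thesis using off_tree y(2) that by simp
  qed
  moreover have "x g = 0" if "g \<notin> edges I" for g
  proof -
    have "g \<notin> T" "g \<noteq> eb" "g \<notin> U" using U eb(1) tree_subset_edges that by auto
    then show ?thesis using off_tree y(3) by simp
  qed
  ultimately have "is_basic_sol I L U x"
    using budget by (simp add: is_basic_sol_def circulation_def)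
  then show ?thesis by blast
qed

end

lemma basic_sol_spec:
  assumes wf: "wf_inst I" and bs: "basis_structure I L T U eb"
  shows "is_basic_sol I L U (basic_sol I L U)"
    and "is_basic_sol I L U x \<Longrightarrow> basic_sol I L U = x"
proof -
  interpret spanning_tree_inst I T using wf bs by unfold_locales (simp_all add: basis_structure_def)
  have eb: "eb \<in> edges I" "eb \<notin> T" and bc: "bC I T eb \<noteq> 0"
    and part: "L \<union> T \<union> U = edges I - {eb}" "L \<inter> T = {}" "L \<inter> U = {}" "T \<inter> U = {}"
    using bs by (auto simp: basis_structure_def)
  have "\<And>g. g \<in> edges I \<Longrightarrow> g \<notin> T \<Longrightarrow> g \<noteq> eb \<Longrightarrow> g \<in> L \<union> U"
    using part(1) by blast
  then have uniq: "\<And>x y. is_basic_sol I L U x \<Longrightarrow> is_basic_sol I L U y \<Longrightarrow> x = y"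
    by (rule basic_sol_unique[OF eb bc])
  have "U \<subseteq> edges I - T" "eb \<notin> U" "L \<inter> (T \<union> U) = {}" "eb \<notin> L"
    using part by auto
  then obtain x0 where "is_basic_sol I L U x0"
    using basic_sol_exists[OF eb bc] by blast
  then have ex1: "\<exists>!x. is_basic_sol I L U x" using uniq by blast
  show "is_basic_sol I L U (basic_sol I L U)" unfolding basic_sol_def using theI'[OF ex1] .
  then show "is_basic_sol I L U x \<Longrightarrow> basic_sol I L U = x" using uniq by blast
qed

section \<open>The simplex pivot\<close>

lemma pv_deltaf_nonneg:
  assumes "0 \<le> x f" "x f \<le> real (cap I f)"
  shows "0 \<le> pv_deltaf I x th f"
  using assms by (auto simp: pv_deltaf_def divide_nonpos_neg divide_nonneg_pos divide_nonneg_neg)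

lemma pv_deltaf_step_bound:
  assumes le: "ereal d \<le> pv_deltaf I x th f" and d: "0 \<le> d"
    and x: "0 \<le> x f" "x f \<le> real (cap I f)"
  shows "0 \<le> x f + d * th f \<and> x f + d * th f \<le> real (cap I f)"
proof -
  consider "th f < 0" | "th f > 0" | "th f = 0" by linarith
  then show ?thesis
  proof cases
    case 1
    then have "d \<le> - (x f / th f)" using le by (simp add: pv_deltaf_def)
    from mult_right_mono_neg[OF this, of "th f"] have "- (x f / th f) * th f \<le> d * th f"
      using 1 by simp
    then have "- x f \<le> d * th f" using 1 by simp
    moreover have "d * th f \<le> 0" using 1 d by (simp add: mult_nonneg_nonpos)
    ultimately show ?thesis using x by simp
  next
    case 2
    then have "d \<le> (real (cap I f) - x f) / th f" using le by (simp add: pv_deltaf_def)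
    then have "d * th f \<le> real (cap I f) - x f" using 2 by (simp add: le_divide_eq)
    moreover have "0 \<le> d * th f" using 2 d by simp
    ultimately show ?thesis using x by simp
  next
    case 3
    then show ?thesis using x by simp
  qed
qed

lemma pv_deltaf_tight:
  assumes "pv_deltaf I x th f = ereal d"
  shows "(th f < 0 \<and> x f + d * th f = 0) \<or> (th f > 0 \<and> x f + d * th f = real (cap I f))"
  using assms by (auto simp: pv_deltaf_def split: if_splits)

locale pivot_step =
  fixes I :: "('v, 'e, 'z) bmcf_scheme" and L T U :: "'e set" and eb :: 'e
    and r :: 'v and \<mu> :: "'v \<Rightarrow> real" and e e' :: 'e
  assumes wf: "wf_inst I"
    and feas: "feasible_basis I L T U eb"
    and pot_mu: "is_potential I T r (feer I) \<mu>"
    and entering: "e \<in> L \<union> U"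
    and leaving: "is_leaving I L T U eb \<mu> e e'"
begin

lemma basis: "basis_structure I L T U eb"
  using feas by (simp add: feasible_basis_def)

lemma partition:
  "L \<union> T \<union> U = edges I - {eb}" "L \<inter> T = {}" "L \<inter> U = {}" "T \<inter> U = {}"
  using basis by (auto simp: basis_structure_def)

sublocale spanning_tree_inst I T
  using wf basis by unfold_locales (simp_all add: basis_structure_def)

lemma eb_edge: "eb \<in> edges I" "eb \<notin> T" and bC_eb: "bC I T eb \<noteq> 0"
  using basis partition by (auto simp: basis_structure_def)

lemma e_edge: "e \<in> edges I" "e \<notin> T" "e \<noteq> eb"
  using entering partition by auto

abbreviation flow :: "'e \<Rightarrow> real" where
  "flow \<equiv> basic_sol I L U"

abbreviation theta :: "'e \<Rightarrow> real" where
  "theta \<equiv> pv_theta I L T eb \<mu> e"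

abbreviation step :: real where
  "step \<equiv> real_of_ereal (pv_delta I flow theta)"

abbreviation flow' :: "'e \<Rightarrow> real" where
  "flow' \<equiv> pv_newflow I L T U eb \<mu> e"

abbreviation sigma :: real where
  "sigma \<equiv> pv_sigma L e"

lemma flow_basic: "is_basic_sol I L U flow"
  by (rule basic_sol_spec(1)[OF wf basis])

lemma flow_bounds: "g \<in> edges I \<Longrightarrow> 0 \<le> flow g \<and> flow g \<le> real (cap I g)"
  using feas by (simp add: feasible_basis_def)

lemma sigma_sq: "sigma * sigma = 1"
  by (simp add: pv_sigma_def)

lemma theta_eq:
  "theta g = sigma * (chi (fcycle I T e) g - bC I T e / bC I T eb * chi (fcycle I T eb) g)"
  using reduced_eq_fcycle_sum[OF e_edge(1,2) pot_mu] reduced_eq_fcycle_sum[OF eb_edge pot_mu]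
  by (simp add: pv_theta_def bC_def)

lemma sigma_theta:
  "sigma * theta g = chi (fcycle I T e) g - bC I T e / bC I T eb * chi (fcycle I T eb) g"
  by (simp add: theta_eq mult.assoc[symmetric] sigma_sq)

lemma theta_outside: "g \<notin> T \<Longrightarrow> g \<noteq> e \<Longrightarrow> g \<noteq> eb \<Longrightarrow> theta g = 0"
  using chi_fcycle_outside[OF e_edge(1,2), of g] chi_fcycle_outside[OF eb_edge, of g]
  by (simp add: theta_eq)

lemma theta_e: "theta e = sigma"
  using chi_fcycle_self[OF e_edge(1,2)] chi_fcycle_outside[OF eb_edge, of e] e_edge
  by (simp add: theta_eq)

lemma circulation_theta: "circulation I theta"
  unfolding theta_eq[abs_def]
  by (intro circulation_scale circulation_diff circulation_fcycle e_edge eb_edge)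

lemma fee_weight_theta: "(\<Sum>g\<in>edges I. feer I g * theta g) = 0"
proof -
  define k where "k = bC I T e / bC I T eb"
  have "(\<Sum>g\<in>edges I. feer I g * theta g) = sigma * (bC I T e - k * bC I T eb)"
    unfolding theta_eq k_def[symmetric]
    by (simp add: bC_def algebra_simps sum_subtractf sum_distrib_left)
  then show ?thesis using bC_eb by (simp add: k_def)
qed

lemma circulation_multiple_of_theta:
  assumes w: "circulation I w"
    and supp: "\<And>g. g \<in> edges I \<Longrightarrow> g \<notin> T \<Longrightarrow> g \<noteq> e \<Longrightarrow> g \<noteq> eb \<Longrightarrow> w g = 0"
    and fee: "(\<Sum>g\<in>edges I. feer I g * w g) = 0"
    and g: "g \<in> edges I"
  shows "w g = w e * (sigma * theta g)"
proof -
  define k where "k = bC I T e / bC I T eb"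
  have decomp: "w h = w e * chi (fcycle I T e) h + w eb * chi (fcycle I T eb) h"
    if "h \<in> edges I" for h
    using circulation_eq_sum_fcycles[OF w _ _ that, of "{e, eb}"] e_edge eb_edge supp by auto
  have "0 = (\<Sum>h\<in>edges I. w e * (feer I h * chi (fcycle I T e) h) + w eb * (feer I h * chi (fcycle I T eb) h))"
    unfolding fee[symmetric] by (rule sum.cong) (simp_all add: decomp algebra_simps)
  also have "\<dots> = w e * bC I T e + w eb * bC I T eb"
    by (simp add: sum.distrib sum_distrib_left[symmetric] bC_def)
  finally have "w eb = - w e * k"
    using bC_eb by (simp add: k_def field_simps)
  then have "w g = w e * (chi (fcycle I T e) g - k * chi (fcycle I T eb) g)"
    using decomp[OF g] by (simp add: algebra_simps)
  also have "\<dots> = w e * (sigma * theta g)"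
    using sigma_theta by (simp add: k_def)
  finally show ?thesis .
qed

lemma pv_deltaf_e: "pv_deltaf I flow theta e = ereal (real (cap I e))"
  using entering partition flow_basic theta_e
  by (auto simp: pv_deltaf_def pv_sigma_def is_basic_sol_def)

lemma pv_delta_le: "g \<in> edges I \<Longrightarrow> pv_delta I flow theta \<le> pv_deltaf I flow theta g"
  using finite_edges by (simp add: pv_delta_def)

lemma pv_delta_eq: "pv_delta I flow theta = ereal step" and step_nonneg: "0 \<le> step"
proof -
  have "0 \<le> pv_delta I flow theta"
    unfolding pv_delta_def using finite_edges e_edge(1) flow_bounds
    by (subst Min_ge_iff) (auto intro: pv_deltaf_nonneg)
  moreover have "pv_delta I flow theta \<le> ereal (real (cap I e))"
    using pv_delta_le[OF e_edge(1)] pv_deltaf_e by simp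
  ultimately show "pv_delta I flow theta = ereal step" "0 \<le> step"
    by (cases "pv_delta I flow theta"; simp)+
qed

lemma flow'_eq: "flow' g = flow g + step * theta g"
  by (simp add: pv_newflow_def Let_def)

lemma flow'_bounds:
  assumes g: "g \<in> edges I"
  shows "0 \<le> flow' g \<and> flow' g \<le> real (cap I g)"
proof -
  have "ereal step \<le> pv_deltaf I flow theta g"
    using pv_delta_le[OF g] pv_delta_eq by simp
  from pv_deltaf_step_bound[OF this step_nonneg] show ?thesis
    using flow_bounds[OF g] by (simp add: flow'_eq)
qed

lemma flow'_basic:
  assumes "\<And>g. g \<in> L' \<Longrightarrow> flow' g = 0" "\<And>g. g \<in> U' \<Longrightarrow> flow' g = real (cap I g)"
  shows "is_basic_sol I L' U' flow'"
proof -
  have "circulation I flow'"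
    unfolding flow'_eq[abs_def]
    by (rule circulation_add[OF circulation_basic_sol[OF flow_basic] circulation_theta])
  moreover have "(\<Sum>g\<in>edges I. feer I g * flow' g) =
      (\<Sum>g\<in>edges I. feer I g * flow g) + step * (\<Sum>g\<in>edges I. feer I g * theta g)"
    by (simp add: flow'_eq algebra_simps sum.distrib sum_distrib_left)
  then have "(\<Sum>g\<in>edges I. feer I g * flow' g) = real (budget I)"
    using flow_basic fee_weight_theta by (simp add: is_basic_sol_def)
  moreover have "flow' g = 0" if "g \<notin> edges I" for g
    using that flow_basic theta_outside tree_subset_edges e_edge eb_edge
    by (auto simp: flow'_eq is_basic_sol_def)
  ultimately show ?thesis
    using assms by (simp add: is_basic_sol_def circulation_def)
qed

lemma flow'_L: "g \<in> L \<Longrightarrow> g \<noteq> e \<Longrightarrow> flow' g = 0"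
  using flow_basic theta_outside[of g] partition by (auto simp: flow'_eq is_basic_sol_def)

lemma flow'_U: "g \<in> U \<Longrightarrow> g \<noteq> e \<Longrightarrow> flow' g = real (cap I g)"
  using flow_basic theta_outside[of g] partition by (auto simp: flow'_eq is_basic_sol_def)

lemma leaving_edge: "e' \<in> edges I" and pv_deltaf_leaving: "pv_deltaf I flow theta e' = ereal step"
  using leaving pv_delta_eq by (simp_all add: is_leaving_def Let_def)

lemma flow'_leaving: "(theta e' < 0 \<and> flow' e' = 0) \<or> (theta e' > 0 \<and> flow' e' = real (cap I e'))"
  using pv_deltaf_tight[OF pv_deltaf_leaving] by (simp add: flow'_eq)

lemma theta_leaving_nonzero: "theta e' \<noteq> 0"
  using flow'_leaving by auto

lemma leaving_edge_cases: "e' = e \<or> e' = eb \<or> e' \<in> T"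
  using theta_leaving_nonzero theta_outside by blast

lemma tree_exchange_eb:
  assumes "e' \<in> T" "\<not> spanning_tree I (T \<union> {e} - {e'})"
  shows "spanning_tree I (T \<union> {eb} - {e'})"
proof -
  have "chi (fcycle I T e) e' = 0"
    using spanning_tree_exchange[OF e_edge(1,2) assms(1)] assms(2) by blast
  then have "chi (fcycle I T eb) e' \<noteq> 0"
    using theta_leaving_nonzero by (auto simp: theta_eq)
  then show ?thesis by (rule spanning_tree_exchange[OF eb_edge assms(1)])
qed

lemma bC_after_pivot_nonzero:
  assumes T': "spanning_tree I T'" "T' \<subseteq> T \<union> {e, eb}" "e' \<notin> T'"
    and f: "f \<in> {e, eb}" "f \<notin> T'" "f \<noteq> e'"
  shows "bC I T' f \<noteq> 0"
proof
  assume zero: "bC I T' f = 0"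
  interpret T': spanning_tree_inst I T' using wf T'(1) by unfold_locales
  define w where "w = chi (fcycle I T' f)"
  have fE: "f \<in> edges I" using f e_edge eb_edge by auto
  have outside: "w g = 0" if "g \<notin> insert f T'" for g
    using T'.chi_fcycle_outside[OF fE f(2) that] by (simp add: w_def)
  have multiple: "w g = w e * (sigma * theta g)" if "g \<in> edges I" for g
  proof (rule circulation_multiple_of_theta[OF _ _ _ that])
    show "circulation I w" unfolding w_def by (rule T'.circulation_fcycle[OF fE f(2)])
    show "w h = 0" if "h \<notin> T" "h \<noteq> e" "h \<noteq> eb" for h
      using outside that T'(2) f(1) by blast
    show "(\<Sum>g\<in>edges I. feer I g * w g) = 0"
      using zero by (simp add: bC_def w_def)
  qed
  have "w e * (sigma * theta e') = 0"
    using multiple[OF leaving_edge] outside T'(3) f(3) by auto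
  then have "w e = 0"
    using theta_leaving_nonzero sigma_sq by auto
  then have "w f = 0" using multiple[OF fE] by simp
  then show False using T'.chi_fcycle_self[OF fE f(2)] by (simp add: w_def)
qed

lemma feasible_after_pivot:
  assumes T': "spanning_tree I T'" "T' \<subseteq> T \<union> {e, eb}" "e' \<notin> T'"
    and eb': "eb' \<in> {e, eb}" "eb' \<notin> T'" "eb' \<noteq> e'"
    and part: "L' \<union> T' \<union> U' = edges I - {eb'}" "L' \<inter> T' = {}" "L' \<inter> U' = {}" "T' \<inter> U' = {}"
    and L': "L' \<subseteq> insert e' (L - {e})" "e' \<in> L' \<Longrightarrow> flow' e' = 0"
    and U': "U' \<subseteq> insert e' (U - {e})" "e' \<in> U' \<Longrightarrow> flow' e' = real (cap I e')"
  shows "feasible_basis I L' T' U' eb'"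
proof -
  have "basis_structure I L' T' U' eb'"
    using bC_after_pivot_nonzero[OF T' eb'] eb' e_edge eb_edge T'(1) part
    by (auto simp: basis_structure_def)
  moreover have "is_basic_sol I L' U' flow'"
    by (rule flow'_basic) (use L' U' flow'_L flow'_U in blast)+
  ultimately show ?thesis
    using basic_sol_spec(2)[OF wf] flow'_bounds by (simp add: feasible_basis_def)
qed

lemma feasible_pivot_tuple:
  "case pivot_tuple I L T U eb \<mu> e e' of (L', T', U', eb') \<Rightarrow> feasible_basis I L' T' U' eb'"
proof -
  have e'_cap: "flow' e' = real (cap I e')" if "flow' e' \<noteq> 0"
    using flow'_leaving that by auto
  note setting = st partition e_edge eb_edge entering leaving_edge
  consider (bound_flip) "e' = e" | (special_leaves) "e' = eb" | (tree_edge_leaves) "e' \<in> T"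
    using leaving_edge_cases by blast
  then show ?thesis
  proof cases
    case bound_flip
    have "flow' e = (if e \<in> L then real (cap I e) else 0)"
      using flow'_leaving theta_e bound_flip by (auto simp: pv_sigma_def)
    then show ?thesis
      using bound_flip setting by (auto simp: pivot_tuple_def intro!: feasible_after_pivot)
  next
    case special_leaves
    then show ?thesis
      using e'_cap setting by (auto simp: pivot_tuple_def Let_def intro!: feasible_after_pivot)
  next
    case tree_edge_leaves
    then have "e' \<noteq> e" "e' \<noteq> eb" using e_edge eb_edge by auto
    moreover have "spanning_tree I (T \<union> {eb} - {e'})" if "\<not> spanning_tree I (T \<union> {e} - {e'})"
      using tree_exchange_eb[OF tree_edge_leaves that] .
    ultimately show ?thesis
      using tree_edge_leaves e'_cap setting
      by (auto simp: pivot_tuple_def Let_def intro!: feasible_after_pivot)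
  qed
qed

end

theorem lemma1:
  fixes I :: "('v, 'e) bmcf"
    and L T U :: "'e set" and eb e e' :: 'e and r :: 'v and \<pi> \<mu> :: "'v \<Rightarrow> real"
  assumes wf: "wf_inst I"
    and root: "r \<in> nodes I"
    and feas: "feasible_basis I L T U eb"
    and pot_pi: "is_potential I T r (costr I) \<pi>"
    and pot_mu: "is_potential I T r (feer I) \<mu>"
    and entering: "(e \<in> L \<and> dval I \<pi> \<mu> eb e < 0) \<or> (e \<in> U \<and> dval I \<pi> \<mu> eb e > 0)"
    and leaving: "is_leaving I L T U eb \<mu> e e'"
  shows "case pivot_tuple I L T U eb \<mu> e e' of (L', T', U', eb') \<Rightarrow>
           feasible_basis I L' T' U' eb' \<and> bC I T' eb' \<noteq> 0"
proof -
  interpret pivot_step I L T U eb r \<mu> e e'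
    using wf feas pot_mu entering leaving by unfold_locales blast+
  show ?thesis
    using feasible_pivot_tuple
    by (auto simp: feasible_basis_def basis_structure_def split: prod.splits)
qed

end
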